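(* Let $p>1$, $\beta=1/(p-1)$, $\gamma=\frac{p-2}{2(p-1)}$, and let $\phi$ be a solution of $$\phi''=\tfrac12 y\phi'-\gamma\phi-|\phi'|^p\ (y>0),\qquad \phi(0)=0,\quad \phi'(0)=\alpha>0,$$ which exists globally on $[0,\infty)$, satisfies $\phi>0$, $\phi'>0$ on $(0,\infty)$, and for which there is $\bar R>0$ with $\phi''<0$ on $[0,\bar R)$ and $\phi''>0$ on $(\bar R,\infty)$. Then $$\lim_{y\to\infty}\frac{\phi(y)}{y^{\beta+1}}=L:=\frac{p^{-\beta}}{\beta+1}.$$ *)

theory Defs
  imports Complex_Main
begin

end

(*
  A function that is bounded below and whose derivative is at most -\<eta>/y wherever it lies above
  a level c eventually stays below c, because the integral of 1/y diverges.

  Rescale u = (\<beta> + 1) \<phi> / y^(\<beta>+1) and v = \<phi>' / y^\<beta>, so that y u' = (\<beta> + 1) (v - u) and the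
  claim is u \<longrightarrow> \<sigma> := p^(-\<beta>).  Beyond Rbar the convexity \<phi>'' > 0 reads v^p < v/2 - (1/2 - 1/p) u.
  Conversely, with G = \<phi>'' + \<phi>'^p, which is comparable to y \<phi>', the ratio R = \<phi>'^p / G has
  R' bounded below by a positive constant wherever R \<le> 1 - e; so R eventually exceeds 1 - e,
  i.e. the rescaled inequality is an equality up to a factor 1 - e for large y.  Tangent-line
  estimates for the convex map t \<mapsto> t^p at \<sigma>, where its slope p \<sigma>^(p-1) is 1, then give
  y u' \<le> -\<eta> whenever u \<ge> \<sigma> + \<epsilon> and y u' \<ge> \<eta> whenever u \<le> \<sigma> - \<epsilon>.

  Only the behaviour beyond Rbar enters: the initial values and the concavity on [0, Rbar)
  are not needed.
*)
theory Submission
  imports Defs "HOL-Analysis.Analysis"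
begin

lemma powr_ge_tangent:
  fixes p a x :: real
  assumes "p \<ge> 1" "a > 0" "x > 0"
  shows "a powr p + p * a powr (p - 1) * (x - a) \<le> x powr p"
proof -
  have "p * a powr (p - 1) * (x - a) \<le> x powr p - a powr p"
    using assms
    by (intro convex_on_imp_above_tangent[where A="{0<..}"] powr_convex)
       (auto simp: interior_open intro!: has_field_derivative_at_within has_real_derivative_powr)
  then show ?thesis by simp
qed

lemma le_if_deriv_neg_above:
  fixes F F' :: "real \<Rightarrow> real"
  assumes "a \<le> b" and "F a \<le> c"
    and deriv: "\<And>x. x \<in> {a..b} \<Longrightarrow> (F has_real_derivative F' x) (at x)"
    and neg: "\<And>x. x \<in> {a..b} \<Longrightarrow> c < F x \<Longrightarrow> F' x < 0"
  shows "F b \<le> c"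
proof (rule ccontr)
  assume "\<not> F b \<le> c"
  have "continuous_on {a..b} F"
    using deriv by (intro continuous_at_imp_continuous_on ballI) (meson DERIV_isCont)
  then obtain z where z: "z \<in> {a..b}" and max: "\<And>x. x \<in> {a..b} \<Longrightarrow> F x \<le> F z"
    using continuous_attains_sup[OF compact_Icc] \<open>a \<le> b\<close> by (metis atLeastAtMost_iff order.refl empty_iff)
  have "c < F z" using max[of b] \<open>\<not> F b \<le> c\<close> \<open>a \<le> b\<close> by auto
  with \<open>F a \<le> c\<close> z have "a < z" by (cases "z = a") auto
  obtain d where "d > 0" and left: "\<And>h. 0 < h \<Longrightarrow> h < d \<Longrightarrow> F z < F (z - h)"
    using DERIV_neg_dec_left[OF deriv[OF z] neg[OF z \<open>c < F z\<close>]] by blast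
  define h where "h = min (d / 2) (z - a)"
  have "0 < h" "h < d" "z - h \<in> {a..b}"
    using \<open>d > 0\<close> \<open>a < z\<close> z by (auto simp: h_def)
  with left max have "F z < F (z - h)" "F (z - h) \<le> F z" by blast+
  then show False by linarith
qed

text \<open>While \<open>F\<close> stays above \<open>c\<close>, \<open>F y + \<eta> * ln y\<close> is nonincreasing, which the lower bound \<open>M\<close>
  forbids for large \<open>y\<close>.\<close>

lemma ex_le_if_deriv_le_neg_inverse:
  fixes F F' :: "real \<Rightarrow> real"
  assumes "0 < \<eta>" "1 \<le> Y"
    and deriv: "\<And>y. Y \<le> y \<Longrightarrow> (F has_real_derivative F' y) (at y)"
    and slope: "\<And>y. Y \<le> y \<Longrightarrow> c \<le> F y \<Longrightarrow> F' y \<le> - \<eta> / y"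
    and bound: "\<And>y. Y \<le> y \<Longrightarrow> M \<le> F y"
  shows "\<exists>y\<ge>Y. F y \<le> c"
proof (rule ccontr)
  assume "\<not> ?thesis"
  then have above: "\<And>y. Y \<le> y \<Longrightarrow> c < F y" by force
  define z where "z = max ((F Y - M) / \<eta> + ln Y) Y + 1"
  have "Y \<le> exp z"
    using exp_ge_add_one_self_aux[of z] \<open>1 \<le> Y\<close> by (simp add: z_def)
  have "F (exp z) + \<eta> * ln (exp z) \<le> F Y + \<eta> * ln Y"
  proof (rule DERIV_nonpos_imp_nonincreasing[OF \<open>Y \<le> exp z\<close>])
    fix x assume x: "Y \<le> x" "x \<le> exp z"
    have "((\<lambda>x. F x + \<eta> * ln x) has_real_derivative F' x + \<eta> * (1 / x)) (at x)"
      using x \<open>1 \<le> Y\<close> by (auto intro!: derivative_eq_intros deriv)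
    moreover have "F' x + \<eta> * (1 / x) \<le> 0"
      using slope[of x] above[of x] x by auto
    ultimately show "\<exists>d. ((\<lambda>x. F x + \<eta> * ln x) has_real_derivative d) (at x) \<and> d \<le> 0"
      by blast
  qed
  with bound[OF \<open>Y \<le> exp z\<close>] have "\<eta> * z \<le> F Y - M + \<eta> * ln Y" by simp
  then have "z \<le> (F Y - M) / \<eta> + ln Y"
    using \<open>0 < \<eta>\<close> by (simp add: field_simps)
  then show False by (simp add: z_def)
qed

lemma eventually_le_by_barrier:
  fixes F F' :: "real \<Rightarrow> real"
  assumes "0 < \<eta>"
    and "eventually (\<lambda>y. (F has_real_derivative F' y) (at y)) at_top"
    and "eventually (\<lambda>y. c \<le> F y \<longrightarrow> F' y \<le> - \<eta> / y) at_top"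
    and "eventually (\<lambda>y. M \<le> F y) at_top"
  shows "eventually (\<lambda>y. F y \<le> c) at_top"
proof -
  have "eventually (\<lambda>y. 1 \<le> y \<and> (F has_real_derivative F' y) (at y)
      \<and> (c \<le> F y \<longrightarrow> F' y \<le> - \<eta> / y) \<and> M \<le> F y) at_top"
    using assms(2-4) eventually_ge_at_top[of 1] by eventually_elim blast
  then obtain Y where "\<And>y. Y \<le> y \<Longrightarrow> 1 \<le> y \<and> (F has_real_derivative F' y) (at y)
      \<and> (c \<le> F y \<longrightarrow> F' y \<le> - \<eta> / y) \<and> M \<le> F y"
    unfolding eventually_at_top_linorder by blast
  then have Y: "1 \<le> Y"
    and deriv: "\<And>y. Y \<le> y \<Longrightarrow> (F has_real_derivative F' y) (at y)"
    and slope: "\<And>y. Y \<le> y \<Longrightarrow> c \<le> F y \<Longrightarrow> F' y \<le> - \<eta> / y"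
    and bound: "\<And>y. Y \<le> y \<Longrightarrow> M \<le> F y"
    by auto
  obtain y1 where "Y \<le> y1" "F y1 \<le> c"
    using ex_le_if_deriv_le_neg_inverse[OF \<open>0 < \<eta>\<close> Y deriv slope bound] by blast
  have "F y \<le> c" if "y1 \<le> y" for y
  proof (rule le_if_deriv_neg_above[where F = F and F' = F', OF that \<open>F y1 \<le> c\<close>])
    fix x assume x: "x \<in> {y1..y}"
    with \<open>Y \<le> y1\<close> show "(F has_real_derivative F' x) (at x)" by (intro deriv) auto
    assume "c < F x"
    have "Y \<le> x" using x \<open>Y \<le> y1\<close> by simp
    with \<open>c < F x\<close> have "F' x \<le> - \<eta> / x" by (intro slope) simp_all
    moreover have "0 < \<eta> / x" using \<open>Y \<le> x\<close> Y \<open>0 < \<eta>\<close> by simp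
    ultimately show "F' x < 0" by linarith
  qed
  then show ?thesis unfolding eventually_at_top_linorder by blast
qed

lemma powr_eq_div_if_mult_powr_eq_1:
  fixes p s :: real
  assumes "0 < s" "p * s powr (p - 1) = 1"
  shows "s powr p = s / p"
proof -
  have "p \<noteq> 0" using assms(2) by auto
  then have "s powr (p - 1) = 1 / p" using assms(2) by (simp add: eq_divide_eq ac_simps)
  moreover have "s powr p = s * s powr (p - 1)"
    using assms(1) by (simp add: powr_diff)
  ultimately show ?thesis by simp
qed

text \<open>In the next lemmas \<open>s\<close>, \<open>g\<close> and \<open>u\<close> stand for \<open>\<sigma>\<close>, \<open>v y\<close> and \<open>u y\<close> of the locale below:
  \<open>g - u\<close> is then \<open>y u' / (\<beta> + 1)\<close>, and the hypothesis on \<open>g powr p\<close> is the rescaled ODE,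
  strict beyond \<open>Rbar\<close> and up to a factor \<open>1 - e\<close> for large \<open>y\<close>.\<close>

lemma slope_upper_bound:
  fixes p s g u :: real
  assumes "1 < p" "0 < s" "p * s powr (p - 1) = 1" "0 < g"
    and "g powr p < g / 2 - (1/2 - 1/p) * u"
  shows "g - u < 2 * (1 - 1/p) * (s - u)"
proof -
  have "s powr p + p * s powr (p - 1) * (g - s) \<le> g powr p"
    using assms by (intro powr_ge_tangent) auto
  then have "s / p + (g - s) < g / 2 - (1/2 - 1/p) * u"
    using assms powr_eq_div_if_mult_powr_eq_1[of s p] by simp
  then show ?thesis by argo
qed

lemma tangent_gap_bound:
  fixes p s g u e :: real
  assumes p: "1 < p" and s: "0 < s" "p * s powr (p - 1) = 1" and g: "0 < g" "g \<le> s"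
    and e: "0 \<le> e" "e \<le> 1/2" and almost: "(1 - e) * (g / 2 - (1/2 - 1/p) * u) \<le> g powr p"
  shows "(p * g powr (p - 1) - 1/2) * (s - g) \<le> 2 * e * s / p - (1/2 - 1/p) * (s - u)"
proof -
  define h where "h = g / 2 - (1/2 - 1/p) * u"
  have s_powr: "s powr p = s / p"
    using s by (rule powr_eq_div_if_mult_powr_eq_1)
  have tangent: "g powr p + p * g powr (p - 1) * (s - g) \<le> s / p"
    using powr_ge_tangent[of p g s] p g s s_powr by simp
  have "g powr p \<le> s / p"
    using powr_mono2[of p g s] g p s_powr by simp
  have "h \<le> 2 * (s / p)"
  proof (cases "h \<le> 0")
    case False
    then have "(1/2) * h \<le> (1 - e) * h" using e by (intro mult_right_mono) auto
    with almost \<open>g powr p \<le> s / p\<close> show ?thesis unfolding h_def by argo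
  qed (use divide_pos_pos[OF s(1), of p] p in linarith)
  then have "e * h \<le> e * (2 * (s / p))"
    using e by (intro mult_left_mono) auto
  then have "e * h \<le> 2 * e * s / p" by (simp add: ac_simps)
  with tangent almost show ?thesis
    unfolding h_def by argo
qed

lemma slope_lower_bound:
  fixes p s g u e m0 E \<eta> :: real
  assumes p: "1 < p" and s: "0 < s" "p * s powr (p - 1) = 1" and g: "0 < g"
    and e: "0 \<le> e" "e \<le> 1/2" and almost: "(1 - e) * (g / 2 - (1/2 - 1/p) * u) \<le> g powr p"
    and m0: "1/2 < m0" "1/p < m0" "m0 \<le> 1"
    and E: "0 \<le> E" "E \<le> s - u"
    and \<eta>: "0 \<le> \<eta>" "\<eta> \<le> (m0 - 1/p) * E - 2 * e * s / p"
    and factor: "g - u < \<eta> \<Longrightarrow> m0 \<le> p * g powr (p - 1)"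
  shows "\<eta> \<le> g - u"
proof (rule ccontr)
  assume "\<not> \<eta> \<le> g - u"
  then have small: "g - u < \<eta>" by simp
  define m where "m = p * g powr (p - 1)"
  have "m0 \<le> m" using factor[OF small] by (simp add: m_def)
  have "0 < 1/p" using p by simp
  then have "(m0 - 1/p) * E \<le> E"
    using m0 E(1) by (intro mult_left_le_one_le) linarith+
  moreover have "0 \<le> 2 * e * s / p" using e s p by simp
  ultimately have "g \<le> s" using small E(2) \<eta>(2) by linarith
  have "m \<le> p * s powr (p - 1)"
    unfolding m_def using \<open>g \<le> s\<close> g p by (intro mult_left_mono powr_mono2) auto
  then have "m \<le> 1" using s(2) by simp
  have "(m - 1/2) * (s - g) \<le> 2 * e * s / p - (1/2 - 1/p) * (s - u)"
    unfolding m_def using tangent_gap_bound[OF p s g \<open>g \<le> s\<close> e almost] .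
  moreover have "(m - 1/2) * (s - u - \<eta>) < (m - 1/2) * (s - g)"
    using small \<open>m0 \<le> m\<close> m0 by (intro mult_strict_left_mono) auto
  moreover have "(m - 1/2) * \<eta> \<le> \<eta>"
    using \<eta>(1) \<open>m \<le> 1\<close> \<open>m0 \<le> m\<close> m0 by (intro mult_left_le_one_le) auto
  moreover have "(m0 - 1/p) * E \<le> (m - 1/p) * (s - u)"
    using \<open>m0 \<le> m\<close> m0 E by (intro mult_mono) auto
  ultimately have "(m0 - 1/p) * E < \<eta> + 2 * e * s / p"
    by argo
  then show False using \<eta>(2) by simp
qed

lemma almost_equilibrium_lower_bound:
  fixes p g u e :: real
  assumes p: "1 < p" "p \<le> 2" and g: "0 < g" and u: "0 \<le> u" and e: "e \<le> 1/2"
    and almost: "(1 - e) * (g / 2 - (1/2 - 1/p) * u) \<le> g powr p"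
  shows "(1/4) powr (1 / (p - 1)) \<le> g"
proof -
  have "0 \<le> (1/p - 1/2) * u"
    using p u by (intro mult_nonneg_nonneg) (simp_all add: field_simps)
  then have "(1/2) * (g / 2) \<le> (1 - e) * (g / 2 - (1/2 - 1/p) * u)"
    using e g by (intro mult_mono) (auto simp: algebra_simps)
  moreover have "g powr p = g * g powr (p - 1)"
    using g by (simp add: powr_diff)
  ultimately have "g * (1/4) \<le> g * g powr (p - 1)"
    using almost by argo
  then have "1/4 \<le> g powr (p - 1)" using g by simp
  then have "(1/4) powr (1 / (p - 1)) \<le> (g powr (p - 1)) powr (1 / (p - 1))"
    using p by (intro powr_mono2) auto
  also have "\<dots> = g"
    using g p by (simp add: powr_powr)
  finally show ?thesis .
qed

lemma slope_factor_lower_bound: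
  fixes p g u e \<eta> :: real
  assumes p: "1 < p" "p < 2" and g: "0 < g" and u: "0 \<le> u"
    and e: "0 \<le> e" "e \<le> (1 - 1/p) / 4"
    and almost: "(1 - e) * (g / 2 - (1/2 - 1/p) * u) \<le> g powr p"
    and small: "g - u < \<eta>"
    and \<eta>: "0 \<le> \<eta>" "(2 - p) * \<eta> \<le> (1/4) powr (1 / (p - 1)) * (1 - 1/p) / 2"
  shows "(1 + 1/p) / 2 \<le> p * g powr (p - 1)"
proof -
  define q where "q = g powr (p - 1)"
  define k where "k = 1/p - 1/2"
  define \<theta> where "\<theta> = (1 - 1/p) / 2"
  have "0 < k" using p by (simp add: k_def field_simps)
  have "0 < \<theta>" using p by (simp add: \<theta>_def)
  have "(1 - 1/p) / 4 \<le> 1/2" using p by (simp add: field_simps)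
  with e have "1/2 \<le> 1 - e" by linarith
  have g_ge: "(1/4) powr (1 / (p - 1)) \<le> g"
    using almost_equilibrium_lower_bound[OF p(1) _ g u _ almost] p(2) \<open>1/2 \<le> 1 - e\<close> by simp
  have "g powr p = g * q"
    using g by (simp add: q_def powr_diff)
  with almost have almost': "(1 - e) * (g / 2 + k * u) \<le> g * q"
    by (simp add: k_def algebra_simps)
  have "k * (g - \<eta>) \<le> k * u"
    using small \<open>0 < k\<close> by (intro mult_left_mono) auto
  then have "(1 - e) * (g / 2 + k * (g - \<eta>)) \<le> (1 - e) * (g / 2 + k * u)"
    using \<open>1/2 \<le> 1 - e\<close> by (intro mult_left_mono) auto
  also have "\<dots> \<le> g * q" by (fact almost')
  finally have "p * ((1 - e) * (g / 2 + k * (g - \<eta>))) \<le> p * (g * q)"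
    using p by (intro mult_left_mono) auto
  moreover have "p * ((1 - e) * (g / 2 + k * (g - \<eta>))) = (1 - e) * (g - p * k * \<eta>)"
    using p by (simp add: k_def field_simps)
  ultimately have "(1 - e) * (g - p * k * \<eta>) \<le> p * (g * q)" by simp
  moreover have "0 \<le> e * (p * k * \<eta>)"
    using e p \<open>0 < k\<close> \<eta>(1) by simp
  moreover have "p * k * \<eta> \<le> g * (\<theta> / 2)"
  proof -
    have "p * k * \<eta> = (2 - p) * \<eta> / 2" using p by (simp add: k_def field_simps)
    also have "\<dots> \<le> (1/4) powr (1 / (p - 1)) * (1 - 1/p) / 4"
      using \<eta>(2) by argo
    also have "\<dots> = (1/4) powr (1 / (p - 1)) * (\<theta> / 2)"
      by (simp add: \<theta>_def)
    also have "\<dots> \<le> g * (\<theta> / 2)"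
      using g_ge \<open>0 < \<theta>\<close> by (intro mult_right_mono) auto
    finally show ?thesis .
  qed
  moreover have "e * g \<le> (\<theta> / 2) * g"
    using e g by (intro mult_right_mono) (auto simp: \<theta>_def)
  ultimately have "g * (1 - \<theta>) \<le> g * (p * q)"
    by (simp add: algebra_simps)
  then have "1 - \<theta> \<le> p * q" using g by simp
  then show ?thesis by (simp add: q_def \<theta>_def field_simps)
qed

locale convex_tail_solution =
  fixes p Rbar :: real and \<phi> \<phi>' \<phi>'' :: "real \<Rightarrow> real"
  assumes p_gt_1: "1 < p"
    and phi_deriv: "\<And>y. 0 < y \<Longrightarrow> (\<phi> has_real_derivative \<phi>' y) (at y)"
    and phi'_deriv: "\<And>y. 0 < y \<Longrightarrow> (\<phi>' has_real_derivative \<phi>'' y) (at y)"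
    and ode: "\<And>y. 0 < y \<Longrightarrow>
      \<phi>'' y = 1/2 * y * \<phi>' y - (p - 2) / (2 * (p - 1)) * \<phi> y - \<phi>' y powr p"
    and phi_pos: "\<And>y. 0 < y \<Longrightarrow> 0 < \<phi> y"
    and phi'_pos: "\<And>y. 0 < y \<Longrightarrow> 0 < \<phi>' y"
    and Rbar_pos: "0 < Rbar"
    and convex_beyond_Rbar: "\<And>y. Rbar < y \<Longrightarrow> 0 < \<phi>'' y"
begin

definition \<beta> :: real where "\<beta> = 1 / (p - 1)"
definition \<gamma> :: real where "\<gamma> = (p - 2) / (2 * (p - 1))"

text \<open>\<open>\<sigma>\<close> solves \<open>\<sigma> powr p = \<sigma> / p\<close>, the rescaled ODE at equilibrium \<open>u = v\<close>.\<close>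

definition \<sigma> :: real where "\<sigma> = p powr (- \<beta>)"
definition G :: "real \<Rightarrow> real" where "G y = y * \<phi>' y / 2 - \<gamma> * \<phi> y"

lemma beta_pos: "0 < \<beta>"
  using p_gt_1 by (simp add: \<beta>_def)

lemma p_minus_1_mult_beta: "(p - 1) * \<beta> = 1"
  using p_gt_1 by (simp add: \<beta>_def)

lemma p_mult_beta: "p * \<beta> = \<beta> + 1"
  using p_gt_1 by (simp add: \<beta>_def field_simps)

lemma beta_plus_1_mult: "(\<beta> + 1) * (1 - 1/p) = 1"
  using p_gt_1 by (simp add: \<beta>_def field_simps)

lemma half_minus_gamma: "1/2 - \<gamma> = \<beta> / 2"
  using p_gt_1 by (simp add: \<beta>_def \<gamma>_def field_simps)

lemma gamma_eq: "\<gamma> = (\<beta> + 1) * (1/2 - 1/p)"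
  using p_gt_1 by (simp add: \<beta>_def \<gamma>_def field_simps)

lemma sigma_pos: "0 < \<sigma>"
  using p_gt_1 by (simp add: \<sigma>_def)

lemma p_mult_sigma_powr: "p * \<sigma> powr (p - 1) = 1"
proof -
  have "\<sigma> powr (p - 1) = p powr (- 1)"
    using p_gt_1 p_minus_1_mult_beta by (simp add: \<sigma>_def powr_powr mult.commute)
  then show ?thesis using p_gt_1 by (simp add: powr_minus)
qed

lemma ode_G: "0 < y \<Longrightarrow> \<phi>'' y = G y - \<phi>' y powr p"
  using ode by (simp add: G_def \<gamma>_def)

lemma dphi_powr_less_G: "Rbar < y \<Longrightarrow> \<phi>' y powr p < G y"
  using ode_G[of y] convex_beyond_Rbar[of y] Rbar_pos by simp

lemma G_pos: "Rbar < y \<Longrightarrow> 0 < G y"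
  using dphi_powr_less_G[of y] powr_ge_zero[of "\<phi>' y" p] by linarith

lemma dphi_mono:
  assumes "Rbar \<le> a" "a \<le> b"
  shows "\<phi>' a \<le> \<phi>' b"
proof (rule DERIV_nonneg_imp_increasing_open[OF \<open>a \<le> b\<close>])
  fix x assume "a < x" "x < b"
  with assms Rbar_pos show "\<exists>d. (\<phi>' has_real_derivative d) (at x) \<and> 0 \<le> d"
    using phi'_deriv convex_beyond_Rbar by (meson less_imp_le order_le_less_trans)
next
  show "continuous_on {a..b} \<phi>'"
    using assms Rbar_pos by (intro continuous_at_imp_continuous_on ballI DERIV_isCont[OF phi'_deriv]) auto
qed

lemma phi_le_phi_Rbar_add:
  assumes "Rbar \<le> y"
  shows "\<phi> y \<le> \<phi> Rbar + y * \<phi>' y"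
proof -
  have "\<phi> y - y * \<phi>' y \<le> \<phi> Rbar - Rbar * \<phi>' Rbar"
  proof (rule DERIV_nonpos_imp_decreasing_open[OF assms])
    fix x assume "Rbar < x" "x < y"
    then have "((\<lambda>x. \<phi> x - x * \<phi>' x) has_real_derivative - x * \<phi>'' x) (at x)"
      using Rbar_pos by (auto intro!: derivative_eq_intros phi_deriv phi'_deriv)
    moreover have "- x * \<phi>'' x \<le> 0"
      using convex_beyond_Rbar[of x] \<open>Rbar < x\<close> Rbar_pos by simp
    ultimately show "\<exists>d. ((\<lambda>x. \<phi> x - x * \<phi>' x) has_real_derivative d) (at x) \<and> d \<le> 0"
      by blast
  next
    show "continuous_on {Rbar..y} (\<lambda>x. \<phi> x - x * \<phi>' x)"
      using Rbar_pos
      by (intro continuous_at_imp_continuous_on ballI continuous_intros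
          DERIV_isCont[OF phi_deriv] DERIV_isCont[OF phi'_deriv]) auto
  qed
  moreover have "0 < Rbar * \<phi>' Rbar" using Rbar_pos phi'_pos by simp
  ultimately show ?thesis by linarith
qed

lemma G_ge:
  assumes "Rbar \<le> y"
  shows "min (1/2) (\<beta>/2) * (y * \<phi>' y) - max \<gamma> 0 * \<phi> Rbar \<le> G y"
proof (cases "0 \<le> \<gamma>")
  case True
  have "G y = (1/2 - \<gamma>) * (y * \<phi>' y) + (\<gamma> * (y * \<phi>' y) - \<gamma> * \<phi> y)"
    by (simp add: G_def algebra_simps)
  moreover have "\<gamma> * \<phi> y \<le> \<gamma> * \<phi> Rbar + \<gamma> * (y * \<phi>' y)"
    using mult_left_mono[OF phi_le_phi_Rbar_add[OF assms] True] by (simp add: algebra_simps)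
  moreover have "min (1/2) (\<beta>/2) * (y * \<phi>' y) \<le> (\<beta>/2) * (y * \<phi>' y)"
    using assms Rbar_pos phi'_pos[of y] by (intro mult_right_mono) auto
  ultimately show ?thesis
    using True unfolding half_minus_gamma by simp
next
  case False
  then have "\<gamma> * \<phi> y \<le> 0"
    using phi_pos[of y] assms Rbar_pos by (simp add: mult_nonpos_nonneg)
  moreover have "min (1/2) (\<beta>/2) * (y * \<phi>' y) \<le> (1/2) * (y * \<phi>' y)"
    using assms Rbar_pos phi'_pos[of y] by (intro mult_right_mono) auto
  ultimately show ?thesis
    using False by (simp add: G_def)
qed

lemma G_le:
  assumes "Rbar \<le> y"
  shows "G y \<le> (1/2 + \<bar>\<gamma>\<bar>) * (y * \<phi>' y) + \<bar>\<gamma>\<bar> * \<phi> Rbar"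
proof -
  have "- \<gamma> * \<phi> y \<le> \<bar>\<gamma>\<bar> * \<phi> y"
    using phi_pos[of y] assms Rbar_pos by (intro mult_right_mono) auto
  also have "\<dots> \<le> \<bar>\<gamma>\<bar> * (\<phi> Rbar + y * \<phi>' y)"
    using phi_le_phi_Rbar_add[OF assms] by (intro mult_left_mono) auto
  finally show ?thesis by (simp add: G_def algebra_simps)
qed

lemma y_dphi_at_top: "filterlim (\<lambda>y. y * \<phi>' y) at_top at_top"
proof (rule filterlim_at_top_mono)
  show "filterlim (\<lambda>y. \<phi>' Rbar * y) at_top at_top"
    using phi'_pos Rbar_pos by (intro filterlim_tendsto_pos_mult_at_top[OF tendsto_const _ filterlim_ident]) auto
  show "eventually (\<lambda>y. \<phi>' Rbar * y \<le> y * \<phi>' y) at_top"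
    using eventually_ge_at_top[of Rbar]
    by eventually_elim (use Rbar_pos dphi_mono in \<open>auto simp: mult.commute intro: mult_left_mono\<close>)
qed

lemma eventually_G_ge:
  assumes "c < min (1/2) (\<beta>/2)"
  shows "eventually (\<lambda>y. c * (y * \<phi>' y) \<le> G y) at_top"
proof -
  have "eventually (\<lambda>y. max \<gamma> 0 * \<phi> Rbar / (min (1/2) (\<beta>/2) - c) \<le> y * \<phi>' y) at_top"
    using y_dphi_at_top by (simp add: filterlim_at_top)
  with eventually_ge_at_top[of Rbar] show ?thesis
  proof eventually_elim
    case (elim y)
    then have "max \<gamma> 0 * \<phi> Rbar \<le> (min (1/2) (\<beta>/2) - c) * (y * \<phi>' y)"
      using assms by (simp add: pos_divide_le_eq mult.commute)
    with G_ge[OF elim(1)] show ?case by (simp add: algebra_simps)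
  qed
qed

lemma eventually_G_le: "eventually (\<lambda>y. G y \<le> (1 + \<bar>\<gamma>\<bar>) * (y * \<phi>' y)) at_top"
proof -
  have "eventually (\<lambda>y. 2 * \<bar>\<gamma>\<bar> * \<phi> Rbar \<le> y * \<phi>' y) at_top"
    using y_dphi_at_top by (simp add: filterlim_at_top)
  with eventually_ge_at_top[of Rbar] show ?thesis
  proof eventually_elim
    case (elim y)
    with G_le[OF elim(1)] have "G y \<le> (1/2 + \<bar>\<gamma>\<bar>) * (y * \<phi>' y) + (y * \<phi>' y) / 2" by simp
    then show ?case by (simp add: algebra_simps)
  qed
qed

definition R :: "real \<Rightarrow> real" where "R y = \<phi>' y powr p / G y"

definition R' :: "real \<Rightarrow> real" where
  "R' y = \<phi>' y powr (p - 1) * (\<phi>'' y * (p * G y - y * \<phi>' y / 2) - \<beta> * \<phi>' y ^ 2 / 2) / G y ^ 2"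

lemma dphi_powr_eq: "0 < y \<Longrightarrow> \<phi>' y powr p = \<phi>' y * \<phi>' y powr (p - 1)"
  using phi'_pos[of y] by (simp add: powr_diff)

lemma R_deriv:
  assumes "Rbar < y"
  shows "(R has_real_derivative R' y) (at y)"
proof -
  have "0 < y" using assms Rbar_pos by simp
  have P: "((\<lambda>y. \<phi>' y powr p) has_real_derivative p * \<phi>' y powr (p - 1) * \<phi>'' y) (at y)"
    using DERIV_chain2[OF has_real_derivative_powr[of "\<phi>' y" p] phi'_deriv[OF \<open>0 < y\<close>]]
      phi'_pos[OF \<open>0 < y\<close>] by simp
  have "(G has_real_derivative (\<phi>' y + y * \<phi>'' y) / 2 - \<gamma> * \<phi>' y) (at y)"
    unfolding G_def [abs_def]
    by (auto intro!: derivative_eq_intros phi_deriv phi'_deriv \<open>0 < y\<close> simp: field_simps)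
  from DERIV_divide[OF P this] G_pos[OF assms]
  have "(R has_real_derivative
      (p * \<phi>' y powr (p - 1) * \<phi>'' y * G y
        - \<phi>' y powr p * ((\<phi>' y + y * \<phi>'' y) / 2 - \<gamma> * \<phi>' y)) / (G y * G y)) (at y)"
    unfolding R_def [abs_def] by simp
  moreover have "p * \<phi>' y powr (p - 1) * \<phi>'' y * G y
        - \<phi>' y powr p * ((\<phi>' y + y * \<phi>'' y) / 2 - \<gamma> * \<phi>' y)
      = \<phi>' y powr (p - 1) * (\<phi>'' y * (p * G y - y * \<phi>' y / 2) - (1/2 - \<gamma>) * \<phi>' y ^ 2)"
    unfolding dphi_powr_eq[OF \<open>0 < y\<close>] by (simp add: algebra_simps power2_eq_square)
  ultimately show ?thesis
    by (simp add: R'_def half_minus_gamma power2_eq_square)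
qed

text \<open>Where \<open>R \<le> 1 - e\<close>, the ODE gives \<open>\<phi>'' \<ge> e G\<close>; since \<open>G\<close> is comparable to \<open>y \<phi>'\<close>,
  the first term of the numerator of \<open>R'\<close> dominates the second, which is only of relative
  order \<open>1 / y\<^sup>2\<close>.\<close>

lemma R'_numerator_ge:
  assumes y: "Rbar < y" "1 \<le> y" and e: "0 < e" "R y \<le> 1 - e"
    and c: "0 < c" "c * (y * \<phi>' y) \<le> G y" and K: "0 < K" "G y \<le> K * (y * \<phi>' y)"
    and \<rho>: "0 < \<rho>" "\<rho> * (y * \<phi>' y) \<le> p * G y - y * \<phi>' y / 2"
    and large: "\<beta> * K / (c\<^sup>2 * e * \<rho>) \<le> y"
  shows "G y ^ 2 * (e * \<rho> / K) / 2
    \<le> \<phi>'' y * (p * G y - y * \<phi>' y / 2) - \<beta> * \<phi>' y ^ 2 / 2"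
proof -
  define W where "W = y * \<phi>' y"
  have "0 < y" "0 < W" "0 < G y"
    using y phi'_pos[of y] G_pos[of y] by (auto simp: W_def)
  from e(2) have "\<phi>' y powr p \<le> (1 - e) * G y"
    using \<open>0 < G y\<close> by (simp add: R_def divide_le_eq)
  then have "e * G y \<le> \<phi>'' y" using ode_G[OF \<open>0 < y\<close>] by (simp add: algebra_simps)
  then have "e * G y * (\<rho> * W) \<le> \<phi>'' y * (p * G y - W / 2)"
    using mult_pos_pos[OF e(1) \<open>0 < G y\<close>] \<rho> \<open>0 < W\<close> by (intro mult_mono) (auto simp: W_def)
  moreover have "G y ^ 2 / K \<le> G y * W"
    using K \<open>0 < G y\<close> by (simp add: W_def power2_eq_square field_simps)
  then have "e * \<rho> * (G y ^ 2 / K) \<le> e * \<rho> * (G y * W)"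
    using e(1) \<rho>(1) by (intro mult_left_mono) auto
  ultimately have main: "G y ^ 2 * (e * \<rho> / K) \<le> \<phi>'' y * (p * G y - W / 2)"
    by (simp add: ac_simps)
  have "(c * W) ^ 2 \<le> G y ^ 2"
    using c \<open>0 < W\<close> by (intro power_mono) (auto simp: W_def)
  then have "\<phi>' y ^ 2 \<le> G y ^ 2 / (c ^ 2 * y ^ 2)"
    using c(1) \<open>0 < y\<close> by (simp add: W_def field_simps power_mult_distrib)
  have "\<beta> * K / (c\<^sup>2 * e * \<rho>) \<le> y ^ 2"
    using large y(2) power_increasing[of 1 2 y] by simp
  then have "\<beta> / (c ^ 2 * y ^ 2) \<le> e * \<rho> / K"
    using c(1) \<open>0 < y\<close> e(1) \<rho>(1) K(1) by (simp add: field_simps)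
  have "\<beta> * \<phi>' y ^ 2 \<le> \<beta> * (G y ^ 2 / (c ^ 2 * y ^ 2))"
    using \<open>\<phi>' y ^ 2 \<le> G y ^ 2 / (c ^ 2 * y ^ 2)\<close> beta_pos by (intro mult_left_mono) auto
  also have "\<dots> = G y ^ 2 * (\<beta> / (c ^ 2 * y ^ 2))" by simp
  also have "\<dots> \<le> G y ^ 2 * (e * \<rho> / K)"
    using \<open>\<beta> / (c ^ 2 * y ^ 2) \<le> e * \<rho> / K\<close> by (intro mult_left_mono) auto
  finally show ?thesis
    using main unfolding W_def by argo
qed

lemma R'_ge:
  assumes y: "Rbar < y" "1 \<le> y" and e: "0 < e" "R y \<le> 1 - e"
    and c: "0 < c" "c * (y * \<phi>' y) \<le> G y" and K: "0 < K" "G y \<le> K * (y * \<phi>' y)"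
    and \<rho>: "0 < \<rho>" "\<rho> * (y * \<phi>' y) \<le> p * G y - y * \<phi>' y / 2"
    and large: "\<beta> * K / (c\<^sup>2 * e * \<rho>) \<le> y"
  shows "\<phi>' Rbar powr (p - 1) * (e * \<rho> / (2 * K)) \<le> R' y"
proof -
  define a where "a = \<phi>' y powr (p - 1)"
  have "0 < y" "0 < G y" using y Rbar_pos G_pos[of y] by auto
  have "\<phi>' Rbar powr (p - 1) \<le> a"
    unfolding a_def using y p_gt_1 phi'_pos[OF Rbar_pos] dphi_mono
    by (intro powr_mono2) auto
  have "a * (G y ^ 2 * (e * \<rho> / K) / 2) / G y ^ 2
      \<le> a * (\<phi>'' y * (p * G y - y * \<phi>' y / 2) - \<beta> * \<phi>' y ^ 2 / 2) / G y ^ 2"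
    using R'_numerator_ge[OF assms] phi'_pos[OF \<open>0 < y\<close>]
    by (intro divide_right_mono mult_left_mono) (auto simp: a_def)
  also have "\<dots> = R' y" by (simp add: R'_def a_def)
  finally have "a * (e * \<rho> / (2 * K)) \<le> R' y"
    using \<open>0 < G y\<close> by (simp add: field_simps)
  moreover have "\<phi>' Rbar powr (p - 1) * (e * \<rho> / (2 * K)) \<le> a * (e * \<rho> / (2 * K))"
    using \<open>\<phi>' Rbar powr (p - 1) \<le> a\<close> e(1) \<rho>(1) K(1) by (intro mult_right_mono) auto
  ultimately show ?thesis by linarith
qed

lemma eventually_R'_ge:
  assumes "0 < e"
  obtains c where "0 < c" "eventually (\<lambda>y. R y \<le> 1 - e \<longrightarrow> c \<le> R' y) at_top"
proof -
  define \<delta> where "\<delta> = min (1/2) (\<beta>/2)"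
  define c where "c = (\<delta> + 1 / (2 * p)) / 2"
  define \<rho> where "\<rho> = p * c - 1/2"
  define K where "K = 1 + \<bar>\<gamma>\<bar>"
  have "1 / (2 * p) < \<delta>"
    using p_gt_1 p_mult_beta beta_pos by (auto simp: \<delta>_def field_simps)
  then have "c < \<delta>" "0 < c" "0 < \<rho>"
    using p_gt_1 by (auto simp: c_def \<rho>_def field_simps)
  have "0 < K" by (simp add: K_def)
  have "eventually (\<lambda>y. R y \<le> 1 - e \<longrightarrow>
      \<phi>' Rbar powr (p - 1) * (e * \<rho> / (2 * K)) \<le> R' y) at_top"
    using eventually_G_ge[OF \<open>c < \<delta>\<close>[unfolded \<delta>_def]] eventually_G_le
      eventually_gt_at_top[of Rbar] eventually_ge_at_top[of 1]
      eventually_ge_at_top[of "\<beta> * K / (c\<^sup>2 * e * \<rho>)"]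
  proof eventually_elim
    case (elim y)
    have "\<rho> * (y * \<phi>' y) \<le> p * G y - y * \<phi>' y / 2"
      using elim(1) p_gt_1 mult_left_mono[of "c * (y * \<phi>' y)" "G y" p]
      by (simp add: \<rho>_def algebra_simps)
    with elim show ?case
      using R'_ge[OF elim(3,4) assms _ \<open>0 < c\<close> elim(1) \<open>0 < K\<close> _ \<open>0 < \<rho>\<close>] by (simp add: K_def)
  qed
  moreover have "0 < \<phi>' Rbar powr (p - 1) * (e * \<rho> / (2 * K))"
    using phi'_pos[OF Rbar_pos] \<open>0 < e\<close> \<open>0 < \<rho>\<close> \<open>0 < K\<close> by simp
  ultimately show ?thesis using that by blast
qed

lemma eventually_dphi_powr_ge_G:
  assumes "0 < e"
  shows "eventually (\<lambda>y. (1 - e) * G y \<le> \<phi>' y powr p) at_top"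
proof -
  obtain c where "0 < c" and R'_ge: "eventually (\<lambda>y. R y \<le> 1 - e \<longrightarrow> c \<le> R' y) at_top"
    using eventually_R'_ge[OF assms] .
  have "eventually (\<lambda>y. - R y \<le> - (1 - e)) at_top"
  proof (rule eventually_le_by_barrier[OF \<open>0 < c\<close>])
    show "eventually (\<lambda>y. ((\<lambda>y. - R y) has_real_derivative - R' y) (at y)) at_top"
      using eventually_gt_at_top[of Rbar] by eventually_elim (intro DERIV_minus R_deriv)
    show "eventually (\<lambda>y. - (1 - e) \<le> - R y \<longrightarrow> - R' y \<le> - c / y) at_top"
      using R'_ge eventually_ge_at_top[of 1]
    proof eventually_elim
      case (elim y)
      have "c / y \<le> c" using elim(2) \<open>0 < c\<close> by (simp add: divide_le_eq)
      with elim(1) show ?case by auto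
    qed
    show "eventually (\<lambda>y. - 1 \<le> - R y) at_top"
      using eventually_gt_at_top[of Rbar]
      by eventually_elim (simp add: R_def divide_le_eq G_pos less_imp_le[OF dphi_powr_less_G])
  qed
  with eventually_gt_at_top[of Rbar] show ?thesis
  proof eventually_elim
    case (elim y)
    then have "1 - e \<le> \<phi>' y powr p / G y" by (simp add: R_def)
    with G_pos[OF elim(1)] show ?case by (simp add: le_divide_eq)
  qed
qed

definition u :: "real \<Rightarrow> real" where "u y = (\<beta> + 1) * \<phi> y / y powr (\<beta> + 1)"
definition v :: "real \<Rightarrow> real" where "v y = \<phi>' y / y powr \<beta>"

lemma u_pos: "0 < y \<Longrightarrow> 0 < u y"
  using phi_pos beta_pos by (simp add: u_def)

lemma v_pos: "0 < y \<Longrightarrow> 0 < v y"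
  using phi'_pos by (simp add: v_def)

lemma u_deriv:
  assumes "0 < y"
  shows "(u has_real_derivative (\<beta> + 1) * (v y - u y) / y) (at y)"
proof -
  have "((\<lambda>y. \<phi> y / y powr (\<beta> + 1)) has_real_derivative
      (\<phi>' y * y powr (\<beta> + 1) - \<phi> y * ((\<beta> + 1) * y powr (\<beta> + 1 - 1)))
        / (y powr (\<beta> + 1) * y powr (\<beta> + 1))) (at y)"
    using assms by (intro DERIV_divide phi_deriv has_real_derivative_powr) auto
  from DERIV_cmult[OF this, of "\<beta> + 1"]
  have "(u has_real_derivative (\<beta> + 1) *
      ((\<phi>' y * y powr (\<beta> + 1) - \<phi> y * ((\<beta> + 1) * y powr \<beta>))
        / (y powr (\<beta> + 1) * y powr (\<beta> + 1)))) (at y)"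
    by (simp add: u_def [abs_def])
  moreover have "(\<beta> + 1) *
      ((\<phi>' y * y powr (\<beta> + 1) - \<phi> y * ((\<beta> + 1) * y powr \<beta>))
        / (y powr (\<beta> + 1) * y powr (\<beta> + 1))) = (\<beta> + 1) * (v y - u y) / y"
    using assms by (simp add: u_def v_def powr_add field_simps)
  ultimately show ?thesis by simp
qed

lemma v_powr: "0 < y \<Longrightarrow> v y powr p = \<phi>' y powr p / y powr (\<beta> + 1)"
  using phi'_pos[of y] p_mult_beta
  by (simp add: v_def powr_divide powr_powr mult.commute)

lemma v_powr_p_minus_1: "0 < y \<Longrightarrow> v y powr (p - 1) = \<phi>' y powr (p - 1) / y"
  using phi'_pos[of y] p_minus_1_mult_beta
  by (simp add: v_def powr_divide powr_powr mult.commute)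

lemma G_scaled: "0 < y \<Longrightarrow> G y / y powr (\<beta> + 1) = v y / 2 - (1/2 - 1/p) * u y"
  unfolding G_def u_def v_def gamma_eq by (simp add: powr_add field_simps) (simp add: add_divide_distrib)

lemma scaled_ode_less:
  assumes "Rbar < y"
  shows "v y powr p < v y / 2 - (1/2 - 1/p) * u y"
  using divide_strict_right_mono[OF dphi_powr_less_G[OF assms], of "y powr (\<beta> + 1)"] assms Rbar_pos
  by (simp add: v_powr G_scaled)

lemma eventually_scaled_ode_ge:
  assumes "0 < e"
  shows "eventually (\<lambda>y. (1 - e) * (v y / 2 - (1/2 - 1/p) * u y) \<le> v y powr p) at_top"
  using eventually_dphi_powr_ge_G[OF assms] eventually_gt_at_top[of 0]
proof eventually_elim
  case (elim y)
  then have "(1 - e) * G y / y powr (\<beta> + 1) \<le> \<phi>' y powr p / y powr (\<beta> + 1)"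
    by (intro divide_right_mono) auto
  with elim(2) show ?case by (simp add: v_powr flip: G_scaled)
qed

lemma eventually_u_le:
  assumes "0 < \<epsilon>"
  shows "eventually (\<lambda>y. u y \<le> \<sigma> + \<epsilon>) at_top"
proof (rule eventually_le_by_barrier)
  show "0 < 2 * \<epsilon>" using assms by simp
  show "eventually (\<lambda>y. (u has_real_derivative (\<beta> + 1) * (v y - u y) / y) (at y)) at_top"
    using eventually_gt_at_top[of 0] by eventually_elim (rule u_deriv)
  show "eventually (\<lambda>y. 0 \<le> u y) at_top"
    using eventually_gt_at_top[of 0] by eventually_elim (simp add: less_imp_le u_pos)
  show "eventually (\<lambda>y. \<sigma> + \<epsilon> \<le> u y \<longrightarrow> (\<beta> + 1) * (v y - u y) / y \<le> - (2 * \<epsilon>) / y) at_top"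
    using eventually_gt_at_top[of Rbar]
  proof eventually_elim
    case (elim y)
    have "0 < y" using elim Rbar_pos by simp
    have "(\<beta> + 1) * (v y - u y) < (\<beta> + 1) * (2 * (1 - 1/p) * (\<sigma> - u y))"
      using slope_upper_bound[OF p_gt_1 sigma_pos p_mult_sigma_powr v_pos[OF \<open>0 < y\<close>]
          scaled_ode_less[OF elim]] beta_pos
      by (intro mult_strict_left_mono) auto
    also have "\<dots> = 2 * (\<sigma> - u y) * ((\<beta> + 1) * (1 - 1/p))"
      by (simp only: ac_simps)
    also have "\<dots> = 2 * (\<sigma> - u y)"
      using beta_plus_1_mult by simp
    finally have "(\<beta> + 1) * (v y - u y) < 2 * (\<sigma> - u y)" .
    show ?case
    proof
      assume "\<sigma> + \<epsilon> \<le> u y"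
      with \<open>(\<beta> + 1) * (v y - u y) < 2 * (\<sigma> - u y)\<close> have "(\<beta> + 1) * (v y - u y) \<le> - (2 * \<epsilon>)"
        by argo
      then show "(\<beta> + 1) * (v y - u y) / y \<le> - (2 * \<epsilon>) / y"
        using \<open>0 < y\<close> by (intro divide_right_mono) auto
    qed
  qed
qed

lemma eventually_slope_factor_ge:
  assumes "m0 < p * min (1/2) (\<beta>/2)"
  shows "eventually (\<lambda>y. m0 \<le> p * v y powr (p - 1)) at_top"
proof (cases "m0 \<le> 0")
  case True
  have "0 \<le> p * v y powr (p - 1)" for y using p_gt_1 by simp
  with True have "m0 \<le> p * v y powr (p - 1)" for y by (meson order_trans)
  then show ?thesis by simp
next
  case False
  define \<delta> where "\<delta> = min (1/2) (\<beta>/2)"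
  define r where "r = m0 / p"
  define c where "c = (r + \<delta>) / 2"
  define e where "e = 1 - r / c"
  have "m0 < p * \<delta>" using assms by (simp add: \<delta>_def)
  then have "r < \<delta>"
    using p_gt_1 by (simp add: r_def pos_divide_less_eq mult.commute)
  moreover have "0 < r" using False p_gt_1 by (simp add: r_def)
  ultimately have "r < c" "c < \<delta>" "0 < c" by (simp_all add: c_def)
  then have "0 < e" "0 < 1 - e" "(1 - e) * (p * c) = m0"
    using \<open>0 < r\<close> p_gt_1 by (auto simp: e_def r_def field_simps)
  from eventually_G_ge[OF \<open>c < \<delta>\<close>[unfolded \<delta>_def]] eventually_dphi_powr_ge_G[OF \<open>0 < e\<close>]
    eventually_gt_at_top[of 0]
  show ?thesis
  proof eventually_elim
    case (elim y)
    have "(1 - e) * (c * (y * \<phi>' y)) \<le> (1 - e) * G y"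
      using elim(1) \<open>0 < 1 - e\<close> by (intro mult_left_mono) auto
    also have "\<dots> \<le> \<phi>' y * \<phi>' y powr (p - 1)"
      using elim(2) dphi_powr_eq[OF elim(3)] by simp
    finally have "(1 - e) * (c * (y * \<phi>' y)) \<le> \<phi>' y * \<phi>' y powr (p - 1)" .
    then have "(1 - e) * c * y \<le> \<phi>' y powr (p - 1)"
      using phi'_pos[OF elim(3)] by (simp add: ac_simps)
    then have "p * ((1 - e) * c * y) \<le> p * \<phi>' y powr (p - 1)"
      using p_gt_1 by (intro mult_left_mono) auto
    moreover have "p * ((1 - e) * c * y) = (1 - e) * (p * c) * y" by (simp only: ac_simps)
    ultimately have "m0 * y \<le> p * \<phi>' y powr (p - 1)"
      using \<open>(1 - e) * (p * c) = m0\<close> by simp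
    then show ?case
      using elim(3) by (simp add: v_powr_p_minus_1 le_divide_eq)
  qed
qed

lemma eventually_slope_factor_ge_if_slope_small:
  assumes "p < 2" "0 \<le> \<eta>" "(2 - p) * \<eta> \<le> (1/4) powr \<beta> * (1 - 1/p) / 2"
  shows "eventually (\<lambda>y. v y - u y < \<eta> \<longrightarrow> (1 + 1/p) / 2 \<le> p * v y powr (p - 1)) at_top"
proof -
  have "0 < (1 - 1/p) / 4" using p_gt_1 by simp
  from eventually_scaled_ode_ge[OF this] eventually_gt_at_top[of 0] show ?thesis
  proof eventually_elim
    case (elim y)
    show ?case
      using slope_factor_lower_bound[OF p_gt_1 assms(1) v_pos[OF elim(2)] less_imp_le[OF u_pos[OF elim(2)]]
          less_imp_le[OF \<open>0 < (1 - 1/p) / 4\<close>] order_refl elim(1) _ assms(2)] assms(3)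
      by (simp add: \<beta>_def)
  qed
qed

lemma eventually_u_ge_if_slope_factor:
  assumes "0 < \<epsilon>" and m0: "1/2 < m0" "1/p < m0" "m0 \<le> 1"
    and \<eta>: "0 < \<eta>" "\<eta> \<le> (m0 - 1/p) * \<epsilon> / 2"
    and factor: "eventually (\<lambda>y. v y - u y < \<eta> \<longrightarrow> m0 \<le> p * v y powr (p - 1)) at_top"
  shows "eventually (\<lambda>y. \<sigma> - \<epsilon> \<le> u y) at_top"
proof -
  define e where "e = min (1/2) ((m0 - 1/p) * \<epsilon> * p / (4 * \<sigma>))"
  have "0 < e" using assms sigma_pos p_gt_1 by (simp add: e_def)
  have "e \<le> (m0 - 1/p) * \<epsilon> * p / (4 * \<sigma>)" by (simp add: e_def)
  then have "e * (4 * \<sigma>) \<le> (m0 - 1/p) * \<epsilon> * p"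
    using sigma_pos by (simp add: pos_le_divide_eq)
  have "2 * e * \<sigma> / p = e * (4 * \<sigma>) / (2 * p)" by simp
  also have "\<dots> \<le> (m0 - 1/p) * \<epsilon> * p / (2 * p)"
    using \<open>e * (4 * \<sigma>) \<le> (m0 - 1/p) * \<epsilon> * p\<close> p_gt_1 by (intro divide_right_mono) auto
  also have "\<dots> = (m0 - 1/p) * \<epsilon> / 2" using p_gt_1 by simp
  finally have "2 * e * \<sigma> / p \<le> (m0 - 1/p) * \<epsilon> / 2" .
  with \<eta>(2) have "\<eta> \<le> (m0 - 1/p) * \<epsilon> - 2 * e * \<sigma> / p"
    by argo
  have "eventually (\<lambda>y. - u y \<le> - (\<sigma> - \<epsilon>)) at_top"
  proof (rule eventually_le_by_barrier[OF \<eta>(1)])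
    show "eventually (\<lambda>y. ((\<lambda>y. - u y) has_real_derivative - ((\<beta> + 1) * (v y - u y) / y)) (at y)) at_top"
      using eventually_gt_at_top[of 0] by eventually_elim (intro DERIV_minus u_deriv)
    show "eventually (\<lambda>y. - (\<sigma> + 1) \<le> - u y) at_top"
      using eventually_u_le[OF zero_less_one] by eventually_elim simp
    show "eventually (\<lambda>y. - (\<sigma> - \<epsilon>) \<le> - u y \<longrightarrow> - ((\<beta> + 1) * (v y - u y) / y) \<le> - \<eta> / y) at_top"
      using factor eventually_scaled_ode_ge[OF \<open>0 < e\<close>] eventually_gt_at_top[of Rbar]
    proof eventually_elim
      case (elim y)
      have "0 < y" using elim(3) Rbar_pos by simp
      show ?case
      proof
        assume "- (\<sigma> - \<epsilon>) \<le> - u y"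
        then have "\<eta> \<le> v y - u y"
          using slope_lower_bound[OF p_gt_1 sigma_pos p_mult_sigma_powr v_pos[OF \<open>0 < y\<close>] _ _ elim(2) m0
              _ _ _ \<open>\<eta> \<le> (m0 - 1/p) * \<epsilon> - 2 * e * \<sigma> / p\<close> elim(1)[rule_format]]
            \<open>0 < e\<close> \<open>0 < \<epsilon>\<close> \<eta>(1) by (simp add: e_def)
        moreover have "v y - u y \<le> (\<beta> + 1) * (v y - u y)"
          using \<eta>(1) beta_pos \<open>\<eta> \<le> v y - u y\<close> by (simp add: algebra_simps)
        ultimately show "- ((\<beta> + 1) * (v y - u y) / y) \<le> - \<eta> / y"
          using \<open>0 < y\<close> by (simp add: divide_right_mono)
      qed
    qed
  qed
  then show ?thesis by eventually_elim simp
qed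

text \<open>The lower bound on \<open>p v^(p-1)\<close> comes from \<open>G \<ge> c y \<phi>'\<close> when \<open>p \<ge> 2\<close>; for \<open>p < 2\<close> that
  bound can lie below \<open>1 / p\<close>, and the rescaled ODE itself is used instead.\<close>

lemma eventually_u_ge:
  assumes "0 < \<epsilon>"
  shows "eventually (\<lambda>y. \<sigma> - \<epsilon> \<le> u y) at_top"
proof (cases "2 \<le> p")
  case True
  define m0 where "m0 = 1/2 + \<beta>/4"
  have "\<beta> \<le> 1" "1/p \<le> 1/2"
    using True by (auto simp: \<beta>_def field_simps)
  then have "p * min (1/2) (\<beta>/2) = (\<beta> + 1) / 2"
    using p_mult_beta by simp
  then have "m0 < p * min (1/2) (\<beta>/2)"
    using beta_pos by (simp add: m0_def)
  have m0: "1/2 < m0" "1/p < m0" "m0 \<le> 1"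
    using beta_pos \<open>\<beta> \<le> 1\<close> \<open>1/p \<le> 1/2\<close> by (simp_all add: m0_def)
  show ?thesis
  proof (rule eventually_u_ge_if_slope_factor[OF assms m0 _ order_refl])
    show "0 < (m0 - 1/p) * \<epsilon> / 2" using m0 assms by simp
    show "eventually (\<lambda>y. v y - u y < (m0 - 1/p) * \<epsilon> / 2 \<longrightarrow> m0 \<le> p * v y powr (p - 1)) at_top"
      using eventually_slope_factor_ge[OF \<open>m0 < p * min (1/2) (\<beta>/2)\<close>] by eventually_elim simp
  qed
next
  case False
  define m0 where "m0 = (1 + 1/p) / 2"
  define \<eta> where "\<eta> = min ((m0 - 1/p) * \<epsilon> / 2) ((1/4) powr \<beta> * (1 - 1/p) / (2 * (2 - p)))"
  have m0: "1/2 < m0" "1/p < m0" "m0 \<le> 1"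
    using False p_gt_1 by (simp_all add: m0_def field_simps)
  have "0 < \<eta>"
    using False p_gt_1 m0 assms by (simp add: \<eta>_def)
  have "(2 - p) * \<eta> \<le> (2 - p) * ((1/4) powr \<beta> * (1 - 1/p) / (2 * (2 - p)))"
    using False by (intro mult_left_mono) (auto simp: \<eta>_def)
  also have "\<dots> = (1/4) powr \<beta> * (1 - 1/p) / 2"
    using False by (simp add: field_simps)
  finally have "(2 - p) * \<eta> \<le> (1/4) powr \<beta> * (1 - 1/p) / 2" .
  from eventually_slope_factor_ge_if_slope_small[OF _ _ this] False \<open>0 < \<eta>\<close>
  have "eventually (\<lambda>y. v y - u y < \<eta> \<longrightarrow> m0 \<le> p * v y powr (p - 1)) at_top"
    by (simp add: m0_def)
  moreover have "\<eta> \<le> (m0 - 1/p) * \<epsilon> / 2" unfolding \<eta>_def by (rule min.cobounded1)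
  ultimately show ?thesis
    using eventually_u_ge_if_slope_factor[OF assms m0 \<open>0 < \<eta>\<close>] by blast
qed

lemma u_tendsto: "(u \<longlongrightarrow> \<sigma>) at_top"
proof (rule order_tendstoI)
  fix a assume "a < \<sigma>"
  then have "eventually (\<lambda>y. \<sigma> - (\<sigma> - a) / 2 \<le> u y) at_top"
    by (intro eventually_u_ge) simp
  moreover have lt: "a < \<sigma> - (\<sigma> - a) / 2" using \<open>a < \<sigma>\<close> by (simp add: field_simps)
  ultimately show "eventually (\<lambda>y. a < u y) at_top"
    by (auto elim: eventually_mono intro: less_le_trans[OF lt])
next
  fix a assume "\<sigma> < a"
  then have "eventually (\<lambda>y. u y \<le> \<sigma> + (a - \<sigma>) / 2) at_top"
    by (intro eventually_u_le) simp
  moreover have lt: "\<sigma> + (a - \<sigma>) / 2 < a" using \<open>\<sigma> < a\<close> by (simp add: field_simps)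
  ultimately show "eventually (\<lambda>y. u y < a) at_top"
    by (auto elim: eventually_mono intro: le_less_trans[OF _ lt])
qed

end

theorem proposition7p2:
  fixes p \<alpha> Rbar :: real and \<phi> \<phi>' \<phi>'' :: "real \<Rightarrow> real"
  assumes p: "p > 1"
    and alpha: "\<alpha> > 0"
    and d1: "\<forall>y\<ge>0. (\<phi> has_real_derivative \<phi>' y) (at y within {0..})"
    and d2: "\<forall>y\<ge>0. (\<phi>' has_real_derivative \<phi>'' y) (at y within {0..})"
    and ode: "\<forall>y>0. \<phi>'' y = 1/2 * y * \<phi>' y - ((p - 2) / (2 * (p - 1))) * \<phi> y - \<bar>\<phi>' y\<bar> powr p"
    and init0: "\<phi> 0 = 0"
    and init1: "\<phi>' 0 = \<alpha>"
    and pos: "\<forall>y>0. \<phi> y > 0 \<and> \<phi>' y > 0"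
    and Rpos: "Rbar > 0"
    and conc: "\<forall>y. 0 \<le> y \<and> y < Rbar \<longrightarrow> \<phi>'' y < 0"
    and conv: "\<forall>y>Rbar. \<phi>'' y > 0"
  shows "((\<lambda>y. \<phi> y / y powr (1 / (p - 1) + 1)) \<longlongrightarrow>
           p powr (- (1 / (p - 1))) / (1 / (p - 1) + 1)) at_top"
proof -
  have at_within: "at y within {0..} = at y" if "0 < y" for y :: real
    using that by (intro at_within_interior) simp
  interpret convex_tail_solution p Rbar \<phi> \<phi>' \<phi>''
  proof
    fix y :: real assume "0 < y"
    show "(\<phi> has_real_derivative \<phi>' y) (at y)" "(\<phi>' has_real_derivative \<phi>'' y) (at y)"
      using d1 d2 \<open>0 < y\<close> by (simp_all flip: at_within[OF \<open>0 < y\<close>])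
    show "0 < \<phi> y" "0 < \<phi>' y" using pos \<open>0 < y\<close> by simp_all
    then show "\<phi>'' y = 1/2 * y * \<phi>' y - (p - 2) / (2 * (p - 1)) * \<phi> y - \<phi>' y powr p"
      using ode \<open>0 < y\<close> by simp
  qed (use p Rpos conv in simp_all)
  have "((\<lambda>y. u y / (\<beta> + 1)) \<longlongrightarrow> \<sigma> / (\<beta> + 1)) at_top"
    using beta_pos by (intro tendsto_divide u_tendsto tendsto_const) simp
  moreover have "u y / (\<beta> + 1) = \<phi> y / y powr (\<beta> + 1)" for y
    using beta_pos by (simp add: u_def)
  ultimately show ?thesis by (simp add: \<sigma>_def \<beta>_def)
qed

end
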